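(* Let $G$ be a simple undirected graph containing the edge $\{v_1,v_2\}$, and let $G'$ be the graph obtained from $G$ by removing the edge $\{v_1,v_2\}$ (same vertex set). If $s\in(-\infty,0]\cup[1,+\infty)$, then $\rho(M_G(s))\geq \rho(M_{G'}(s))$.
   Context: For a simple undirected graph $G$ on $n$ vertices with adjacency matrix $A$, diagonal degree matrix $D$ and $n\times n$ identity matrix $I$, and a real parameter $s$, the deformed Laplacian matrix of $G$ is $M_G(s)=I-sA+s^2(D-I)$. For a real symmetric matrix $B$, $\rho(B)$ denotes its spectral radius, here meaning its largest eigenvalue $\sup_{|x|=1}\langle x,Bx\rangle$. *)

theory Defs
  imports "HOL-Analysis.Analysis"
begin

definition simple_graph :: "('n::finite \<Rightarrow> 'n \<Rightarrow> bool) \<Rightarrow> bool" where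
  "simple_graph E \<longleftrightarrow> (\<forall>i j. E i j \<longrightarrow> E j i) \<and> (\<forall>i. \<not> E i i)"

definition adj_matrix :: "('n::finite \<Rightarrow> 'n \<Rightarrow> bool) \<Rightarrow> real^'n^'n" where
  "adj_matrix E = (\<chi> i j. if E i j then 1 else 0)"

definition deg_matrix :: "('n::finite \<Rightarrow> 'n \<Rightarrow> bool) \<Rightarrow> real^'n^'n" where
  "deg_matrix E = (\<chi> i j. if i = j then real (card {k. E i k}) else 0)"

definition deformed_laplacian :: "('n::finite \<Rightarrow> 'n \<Rightarrow> bool) \<Rightarrow> real \<Rightarrow> real^'n^'n" where
  "deformed_laplacian E s = mat 1 - s *\<^sub>R adj_matrix E + (s^2) *\<^sub>R (deg_matrix E - mat 1)"

text \<open>Spectral radius in the paper's sense: largest eigenvalue, sup of the Rayleigh quotient.\<close>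
definition rho :: "real^'n^'n \<Rightarrow> real" where
  "rho B = (SUP x\<in>{x::real^'n. norm x = 1}. x \<bullet> (B *v x))"

definition delete_edge :: "('n \<Rightarrow> 'n \<Rightarrow> bool) \<Rightarrow> 'n \<Rightarrow> 'n \<Rightarrow> ('n \<Rightarrow> 'n \<Rightarrow> bool)" where
  "delete_edge E u v = (\<lambda>i j. E i j \<and> \<not> ((i = u \<and> j = v) \<or> (i = v \<and> j = u)))"

end

theory Submission
  imports Defs
begin

text \<open>Deleting the edge \<open>{v\<^sub>1,v\<^sub>2}\<close> changes the quadratic form of \<open>M\<^sub>G(s)\<close> by
  \<open>s\<^sup>2(x\<^sub>1\<^sup>2 + x\<^sub>2\<^sup>2) - 2s x\<^sub>1x\<^sub>2\<close>. For \<open>s \<ge> 1\<close> this is at least \<open>s(x\<^sub>1 - x\<^sub>2)\<^sup>2 \<ge> 0\<close>, so the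
  Rayleigh quotient of \<open>G\<close> dominates that of \<open>G'\<close> pointwise. For \<open>s \<le> 0\<close> it is nonnegative
  on nonnegative vectors, and since \<open>M\<^sub>G'(s)\<close> then has nonnegative off-diagonal entries,
  replacing \<open>x\<close> by \<open>|x|\<close> does not decrease its Rayleigh quotient.\<close>

lemma quadratic_form_eq_sum:
  "x \<bullet> (B *v x) = (\<Sum>i\<in>UNIV. \<Sum>j\<in>UNIV. x$i * B$i$j * x$j)"
  by (simp add: inner_vec_def matrix_vector_mult_def sum_distrib_left mult_ac)

lemma bdd_above_quadratic_form_sphere:
  "bdd_above ((\<lambda>x. x \<bullet> (B *v x)) ` {x::real^'n. norm x = 1})"
proof (rule bdd_aboveI2)
  fix x :: "real^'n"
  assume "x \<in> {x. norm x = 1}"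
  then have x_le_1: "\<bar>x$i\<bar> \<le> 1" for i
    using component_le_norm_cart[of x i] by simp
  have "x$i * B$i$j * x$j \<le> \<bar>B$i$j\<bar>" for i j
  proof -
    have "x$i * B$i$j * x$j \<le> \<bar>x$i\<bar> * \<bar>B$i$j\<bar> * \<bar>x$j\<bar>"
      by (metis abs_ge_self abs_mult)
    also have "\<dots> \<le> 1 * \<bar>B$i$j\<bar> * 1"
      using x_le_1 by (intro mult_mono) auto
    finally show ?thesis
      by simp
  qed
  then show "x \<bullet> (B *v x) \<le> (\<Sum>i\<in>UNIV. \<Sum>j\<in>UNIV. \<bar>B$i$j\<bar>)"
    unfolding quadratic_form_eq_sum by (intro sum_mono)
qed

lemma rho_le_rhoI:
  assumes "\<And>x. norm x = 1 \<Longrightarrow> \<exists>y. norm y = 1 \<and> x \<bullet> (B *v x) \<le> y \<bullet> (A *v y)"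
  shows "rho B \<le> rho A"
  unfolding rho_def
proof (rule cSUP_mono)
  show "{x::real^'n. norm x = 1} \<noteq> {}"
    using norm_axis_1 by blast
qed (use assms bdd_above_quadratic_form_sphere in auto)

lemma quadratic_form_le_abs:
  fixes B :: "real^'n^'n"
  assumes "\<And>i j. i \<noteq> j \<Longrightarrow> B$i$j \<ge> 0"
  shows "x \<bullet> (B *v x) \<le> (\<chi> i. \<bar>x$i\<bar>) \<bullet> (B *v (\<chi> i. \<bar>x$i\<bar>))"
  unfolding quadratic_form_eq_sum
proof (intro sum_mono)
  fix i j
  show "x$i * B$i$j * x$j \<le> (\<chi> i. \<bar>x$i\<bar>)$i * B$i$j * (\<chi> i. \<bar>x$i\<bar>)$j"
  proof (cases "i = j")
    case False
    have "x$i * x$j \<le> \<bar>x$i\<bar> * \<bar>x$j\<bar>"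
      by (metis abs_ge_self abs_mult)
    then have "x$i * x$j * B$i$j \<le> \<bar>x$i\<bar> * \<bar>x$j\<bar> * B$i$j"
      using assms[OF False] by (rule mult_right_mono)
    then show ?thesis
      by (simp add: mult_ac)
  qed (simp add: mult_ac abs_mult_self_eq)
qed

lemma norm_abs_components: "norm (\<chi> i. \<bar>x$i\<bar>) = norm (x::real^'n)"
  by (simp add: norm_eq_sqrt_inner inner_vec_def)

definition matrix_unit :: "'n::finite \<Rightarrow> 'n \<Rightarrow> real^'n^'n" where
  "matrix_unit a b = (\<chi> i j. if i = a \<and> j = b then 1 else 0)"

lemma quadratic_form_matrix_unit: "x \<bullet> (matrix_unit a b *v x) = x$a * x$b"
proof -
  have "(if P then 1 else 0) * y = (if P then y else 0)" for P and y :: real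
    by simp
  then have "matrix_unit a b *v x = x$b *\<^sub>R axis a 1"
    by (simp add: vec_eq_iff matrix_unit_def matrix_vector_mult_def axis_def)
  then show ?thesis
    by (simp add: inner_axis)
qed

lemma real_card_neighbours_delete_edge:
  assumes "simple_graph E" "E v1 v2"
  shows "real (card {k. E i k})
    = real (card {k. delete_edge E v1 v2 i k}) + (if i = v1 \<or> i = v2 then 1 else 0)"
proof -
  have "v1 \<noteq> v2" "E v2 v1"
    using assms by (auto simp: simple_graph_def)
  consider "i = v1" | "i = v2" | "i \<noteq> v1" "i \<noteq> v2"
    by blast
  then show ?thesis
  proof cases
    case 1
    then have "{k. delete_edge E v1 v2 i k} = {k. E i k} - {v2}" "v2 \<in> {k. E i k}"
      using \<open>v1 \<noteq> v2\<close> assms(2) by (auto simp: delete_edge_def)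
    then show ?thesis
      using 1 card.remove[of "{k. E i k}" v2] by simp
  next
    case 2
    then have "{k. delete_edge E v1 v2 i k} = {k. E i k} - {v1}" "v1 \<in> {k. E i k}"
      using \<open>v1 \<noteq> v2\<close> \<open>E v2 v1\<close> by (auto simp: delete_edge_def)
    then show ?thesis
      using 2 card.remove[of "{k. E i k}" v1] by simp
  next
    case 3
    then show ?thesis
      by (simp add: delete_edge_def)
  qed
qed

lemma adj_matrix_delete_edge:
  assumes "simple_graph E" "E v1 v2"
  shows "adj_matrix E - adj_matrix (delete_edge E v1 v2) = matrix_unit v1 v2 + matrix_unit v2 v1"
proof -
  have "v1 \<noteq> v2" "E v2 v1"
    using assms by (auto simp: simple_graph_def)
  then show ?thesis
    using assms(2) by (simp add: vec_eq_iff adj_matrix_def matrix_unit_def delete_edge_def)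
qed

lemma deg_matrix_delete_edge:
  assumes "simple_graph E" "E v1 v2"
  shows "deg_matrix E - deg_matrix (delete_edge E v1 v2) = matrix_unit v1 v1 + matrix_unit v2 v2"
proof -
  have "v1 \<noteq> v2"
    using assms by (auto simp: simple_graph_def)
  then show ?thesis
    by (simp add: vec_eq_iff deg_matrix_def matrix_unit_def real_card_neighbours_delete_edge[OF assms])
qed

lemma deformed_laplacian_diff:
  "deformed_laplacian E s - deformed_laplacian F s
    = s\<^sup>2 *\<^sub>R (deg_matrix E - deg_matrix F) - s *\<^sub>R (adj_matrix E - adj_matrix F)"
  by (simp add: deformed_laplacian_def algebra_simps)

lemma quadratic_form_deformed_laplacian_delete_edge:
  assumes "simple_graph E" "E v1 v2"
  shows "x \<bullet> (deformed_laplacian E s *v x)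
    = x \<bullet> (deformed_laplacian (delete_edge E v1 v2) s *v x)
      + (s\<^sup>2 * ((x$v1)\<^sup>2 + (x$v2)\<^sup>2) - 2 * s * (x$v1 * x$v2))"
proof -
  have "x \<bullet> (deformed_laplacian E s *v x) - x \<bullet> (deformed_laplacian (delete_edge E v1 v2) s *v x)
      = x \<bullet> ((deformed_laplacian E s - deformed_laplacian (delete_edge E v1 v2) s) *v x)"
    by (simp add: matrix_vector_mult_diff_rdistrib inner_diff_right)
  also have "\<dots> = s\<^sup>2 * ((x$v1)\<^sup>2 + (x$v2)\<^sup>2) - 2 * s * (x$v1 * x$v2)"
    by (simp add: deformed_laplacian_diff adj_matrix_delete_edge[OF assms]
        deg_matrix_delete_edge[OF assms] matrix_vector_mult_diff_rdistrib
        matrix_vector_mult_add_rdistrib scaleR_matrix_vector_assoc[symmetric] inner_diff_right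
        inner_add_right quadratic_form_matrix_unit power2_eq_square algebra_simps)
  finally show ?thesis
    by simp
qed

lemma deformed_laplacian_off_diagonal_nonneg:
  "s \<le> 0 \<Longrightarrow> i \<noteq> j \<Longrightarrow> deformed_laplacian E s $ i $ j \<ge> 0"
  by (simp add: deformed_laplacian_def adj_matrix_def deg_matrix_def mat_def)

lemma two_mult_le_sum_squares_scaled:
  fixes s a b :: real
  assumes "s \<ge> 1 \<or> s \<le> 0 \<and> a \<ge> 0 \<and> b \<ge> 0"
  shows "2 * s * (a * b) \<le> s\<^sup>2 * (a\<^sup>2 + b\<^sup>2)"
  using assms
proof
  assume "s \<ge> 1"
  have "s\<^sup>2 * (a\<^sup>2 + b\<^sup>2) - 2 * s * (a * b) = s * (s - 1) * (a\<^sup>2 + b\<^sup>2) + s * (a - b)\<^sup>2"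
    by (simp add: power2_eq_square algebra_simps)
  moreover have "0 \<le> s * (s - 1) * (a\<^sup>2 + b\<^sup>2) + s * (a - b)\<^sup>2"
    using \<open>s \<ge> 1\<close> by simp
  ultimately show ?thesis
    by simp
next
  assume "s \<le> 0 \<and> a \<ge> 0 \<and> b \<ge> 0"
  then have "2 * s * (a * b) \<le> 0"
    by (simp add: mult_nonpos_nonneg)
  also have "0 \<le> s\<^sup>2 * (a\<^sup>2 + b\<^sup>2)"
    by simp
  finally show ?thesis .
qed

theorem theorem3p4:
  fixes E :: "'n::finite \<Rightarrow> 'n \<Rightarrow> bool" and v1 v2 :: 'n and s :: real
  assumes "simple_graph E"
    and "E v1 v2"
    and "s \<le> 0 \<or> s \<ge> 1"
  shows "rho (deformed_laplacian E s) \<ge> rho (deformed_laplacian (delete_edge E v1 v2) s)"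
proof -
  let ?M = "deformed_laplacian E s" and ?N = "deformed_laplacian (delete_edge E v1 v2) s"
  note quadratic_form = quadratic_form_deformed_laplacian_delete_edge[OF assms(1,2), of _ s]
  from assms(3) show ?thesis
  proof
    assume "s \<le> 0"
    have "x \<bullet> (?N *v x) \<le> y \<bullet> (?M *v y)" if y: "y = (\<chi> i. \<bar>x$i\<bar>)" for x y
    proof -
      have "x \<bullet> (?N *v x) \<le> y \<bullet> (?N *v y)"
        using quadratic_form_le_abs[OF deformed_laplacian_off_diagonal_nonneg[OF \<open>s \<le> 0\<close>]] y by blast
      also have "\<dots> \<le> y \<bullet> (?M *v y)"
        using quadratic_form[of y] two_mult_le_sum_squares_scaled[of s "y$v1" "y$v2"] \<open>s \<le> 0\<close> y
        by simp
      finally show ?thesis .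
    qed
    then show ?thesis
      by (intro rho_le_rhoI) (metis norm_abs_components)
  next
    assume "s \<ge> 1"
    then show ?thesis
      using quadratic_form two_mult_le_sum_squares_scaled by (intro rho_le_rhoI) force
  qed
qed

end
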